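(* Let $p_1,\dots,p_n\ge0$ and unit vectors $\vec a_1,\dots,\vec a_n\in\mathbb{R}^3$ satisfy $\sum_ip_i=2$ and $\sum_ip_i\vec a_i=\vec0$, and let $f:\mathbb{R}^3\to\mathbb{R}$, $f(\vec x)=\sum_ip_i\,\Theta(\vec x\cdot\vec a_i)$. Then (1) $f(\vec x)=\frac12\sum_ip_i\,|\vec a_i\cdot\vec x|$ for all $\vec x\in\mathbb{R}^3$; in particular $f$ is continuous and $f(\alpha\vec x)=|\alpha|f(\vec x)$ for all $\alpha\in\mathbb{R}$ (so $f(-\vec x)=f(\vec x)$); (2) $\sum_{s_x,s_y,s_z=\pm1}f(\vec v_{s_xs_ys_z})\le 8$.
   Context: $\Theta(x)=x$ for $x\ge0$ and $\Theta(x)=0$ for $x<0$. For $s_x,s_y,s_z\in\{+1,-1\}$, $\vec v_{s_xs_ys_z}=(s_x,s_y,s_z)^T$. *)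

theory Defs
  imports "HOL-Analysis.Analysis"
begin

definition Theta :: "real \<Rightarrow> real" where
  "Theta x = (if x \<ge> 0 then x else 0)"

definition sgnvec :: "real \<Rightarrow> real \<Rightarrow> real \<Rightarrow> real^3" where
  "sgnvec sx sy sz = (\<chi> i. if i = 1 then sx else if i = 2 then sy else sz)"

end

theory Submission
  imports Defs
begin

text \<open>
  Since Theta t = (t + |t|)/2 and the linear parts sum to x \<bullet> (\<Sum>i. p i a i) = 0, we get
  f x = 1/2 \<Sum>i. p i |a i \<bullet> x|, which is clearly continuous and absolutely homogeneous.
  For the bound, the mixed terms cancel in the sum of (a \<bullet> v)^2 over the eight cube
  vertices v, which is therefore 8 |a|^2; Cauchy-Schwarz over these vertices gives
  \<Sum>v. |a \<bullet> v| \<le> 8 |a|, and weighting by p i / 2 with \<Sum>i. p i = 2 yields 8.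
\<close>

lemma Theta_eq_half_add_abs: "Theta t = (t + \<bar>t\<bar>) / 2"
  by (simp add: Theta_def)

lemma sum_Theta_inner_eq_half_sum_abs:
  fixes a :: "'i \<Rightarrow> 'a::real_inner"
  assumes balanced: "(\<Sum>i\<in>I. p i *\<^sub>R a i) = 0"
  shows "(\<Sum>i\<in>I. p i * Theta (x \<bullet> a i)) = (1/2) * (\<Sum>i\<in>I. p i * \<bar>a i \<bullet> x\<bar>)"
proof -
  have "(\<Sum>i\<in>I. p i * Theta (x \<bullet> a i))
      = (1/2) * (\<Sum>i\<in>I. p i * (x \<bullet> a i)) + (1/2) * (\<Sum>i\<in>I. p i * \<bar>a i \<bullet> x\<bar>)"
    unfolding Theta_eq_half_add_abs
    by (simp add: sum_distrib_left sum.distrib[symmetric] add_divide_distrib algebra_simps inner_commute)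
  also have "(\<Sum>i\<in>I. p i * (x \<bullet> a i)) = x \<bullet> (\<Sum>i\<in>I. p i *\<^sub>R a i)"
    by (simp add: inner_sum_right)
  finally show ?thesis
    using balanced by simp
qed

lemma sum_abs_inner_scaleR:
  fixes a :: "'i \<Rightarrow> 'a::real_inner"
  shows "(\<Sum>i\<in>I. p i * \<bar>a i \<bullet> (c *\<^sub>R x)\<bar>) = \<bar>c\<bar> * (\<Sum>i\<in>I. p i * \<bar>a i \<bullet> x\<bar>)"
  by (simp add: abs_mult sum_distrib_left algebra_simps)

lemma inner_sgnvec: "a \<bullet> sgnvec sx sy sz = a$1 * sx + a$2 * sy + a$3 * sz"
  by (simp add: sgnvec_def inner_vec_def sum_3)

lemma norm_vec3_squared: "(norm (a::real^3))^2 = (a$1)^2 + (a$2)^2 + (a$3)^2"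
  unfolding power2_norm_eq_inner by (simp add: inner_vec_def sum_3 power2_eq_square)

lemma sum_sgnvec_inner_squared:
  "(\<Sum>sx\<in>{-1,1}. \<Sum>sy\<in>{-1,1}. \<Sum>sz\<in>{-1,1::real}. (a \<bullet> sgnvec sx sy sz)^2) = 8 * (norm a)^2"
  unfolding norm_vec3_squared by (simp add: inner_sgnvec power2_eq_square algebra_simps)

lemma sum_sgnvec_abs_inner_le:
  "(\<Sum>sx\<in>{-1,1}. \<Sum>sy\<in>{-1,1}. \<Sum>sz\<in>{-1,1::real}. \<bar>a \<bullet> sgnvec sx sy sz\<bar>) \<le> 8 * norm a"
proof -
  define C :: "(real \<times> real \<times> real) set" where "C = {-1,1} \<times> {-1,1} \<times> {-1,1}"
  define g where "g = (\<lambda>(sx, sy, sz). a \<bullet> sgnvec sx sy sz)"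
  have card_C: "card C = 8"
    by (simp add: C_def card_cartesian_product)
  have "(\<Sum>sx\<in>{-1,1}. \<Sum>sy\<in>{-1,1}. \<Sum>sz\<in>{-1,1::real}. \<bar>a \<bullet> sgnvec sx sy sz\<bar>) = (\<Sum>v\<in>C. \<bar>g v\<bar>)"
    by (simp add: C_def g_def sum.cartesian_product)
  moreover have "(\<Sum>v\<in>C. \<bar>g v\<bar>)^2 \<le> (8 * norm a)^2"
  proof -
    have "(\<Sum>v\<in>C. \<bar>g v\<bar>)^2 \<le> (\<Sum>v\<in>C. \<bar>g v\<bar>^2) * 8"
      using sum_squared_le_sum_of_squares[of "\<lambda>v. \<bar>g v\<bar>" C] card_C by simp
    also have "(\<Sum>v\<in>C. \<bar>g v\<bar>^2) = 8 * (norm a)^2"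
      using sum_sgnvec_inner_squared[of a] by (simp add: C_def g_def sum.cartesian_product)
    finally show ?thesis
      by (simp add: power_mult_distrib)
  qed
  ultimately show ?thesis
    by (metis norm_ge_zero power2_le_imp_le mult_nonneg_nonneg zero_le_numeral)
qed

theorem mainTheorem5:
  fixes n :: nat and p :: "nat \<Rightarrow> real" and a :: "nat \<Rightarrow> real^3"
    and f :: "real^3 \<Rightarrow> real"
  assumes p_nonneg: "\<And>i. i < n \<Longrightarrow> p i \<ge> 0"
    and a_unit: "\<And>i. i < n \<Longrightarrow> norm (a i) = 1"
    and p_sum: "(\<Sum>i<n. p i) = 2"
    and pa_sum: "(\<Sum>i<n. p i *\<^sub>R a i) = 0"
    and f_def: "f = (\<lambda>x. \<Sum>i<n. p i * Theta (x \<bullet> a i))"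
  shows "(\<forall>x. f x = (1/2) * (\<Sum>i<n. p i * \<bar>a i \<bullet> x\<bar>))
       \<and> continuous_on UNIV f
       \<and> (\<forall>\<alpha> x. f (\<alpha> *\<^sub>R x) = \<bar>\<alpha>\<bar> * f x)
       \<and> (\<forall>x. f (- x) = f x)
       \<and> (\<Sum>sx\<in>{-1,1}. \<Sum>sy\<in>{-1,1}. \<Sum>sz\<in>{-1,1}. f (sgnvec sx sy sz)) \<le> 8"
proof -
  have f_abs: "f = (\<lambda>x. (1/2) * (\<Sum>i<n. p i * \<bar>a i \<bullet> x\<bar>))"
    unfolding f_def using sum_Theta_inner_eq_half_sum_abs[OF pa_sum] by presburger
  have homogeneous: "f (\<alpha> *\<^sub>R x) = \<bar>\<alpha>\<bar> * f x" for \<alpha> x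
    unfolding f_abs sum_abs_inner_scaleR by simp
  have "(\<Sum>sx\<in>{-1,1}. \<Sum>sy\<in>{-1,1}. \<Sum>sz\<in>{-1,1}. f (sgnvec sx sy sz))
      = (\<Sum>i<n. p i / 2 * (\<Sum>sx\<in>{-1,1}. \<Sum>sy\<in>{-1,1}. \<Sum>sz\<in>{-1,1::real}. \<bar>a i \<bullet> sgnvec sx sy sz\<bar>))"
    unfolding f_abs by (simp add: sum_distrib_left sum.distrib algebra_simps)
  also have "\<dots> \<le> (\<Sum>i<n. p i / 2 * 8)"
  proof (intro sum_mono mult_left_mono)
    fix i assume "i \<in> {..<n}"
    then show "(\<Sum>sx\<in>{-1,1}. \<Sum>sy\<in>{-1,1}. \<Sum>sz\<in>{-1,1::real}. \<bar>a i \<bullet> sgnvec sx sy sz\<bar>) \<le> 8"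
      and "0 \<le> p i / 2"
      using sum_sgnvec_abs_inner_le[of "a i"] a_unit p_nonneg by simp_all
  qed
  also have "\<dots> = 8"
    using p_sum by (simp add: sum_distrib_left[symmetric])
  finally have "(\<Sum>sx\<in>{-1,1}. \<Sum>sy\<in>{-1,1}. \<Sum>sz\<in>{-1,1}. f (sgnvec sx sy sz)) \<le> 8" .
  moreover have "continuous_on UNIV f"
    unfolding f_abs by (intro continuous_intros)
  moreover have "f (- x) = f x" for x
    using homogeneous[of "-1" x] by simp
  ultimately show ?thesis
    using f_abs homogeneous by auto
qed

end
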